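(* Let $\alpha\ge1$ and $\phi\in[0,2\pi_\alpha)\setminus\{\pi_\alpha/2,3\pi_\alpha/2\}$. The only solution $\zeta$ with $|\zeta|<\pi_\alpha$ of the equation $$\tan_\alpha(\zeta+\phi)-\tan_\alpha(\phi)=\zeta$$ is $\zeta=0$.
   Context: For real $a\ge1$: $\pi_a=2\int_0^1(1-t^{2a})^{-1/2}dt$; $\sin_a$ is the inverse of $s\mapsto\int_0^s(1-t^{2a})^{-1/2}dt$ on $[0,\pi_a/2]$, extended by $\sin_a(s)=\sin_a(\pi_a-s)$ to $[0,\pi_a]$, to an odd function on $[-\pi_a,\pi_a]$ and $2\pi_a$-periodically to $\mathbb{R}$; $\cos_a=\sin_a'$ and $\tan_a=\sin_a/\cos_a$ (defined where $\cos_a\neq0$). *)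

theory Defs
  imports "HOL-Analysis.Analysis"
begin

text \<open>Integrand (1 - t^(2a))^(-1/2) on [0,1]; the (improper) integral is the
Henstock-Kurzweil integral, which coincides with the Lebesgue integral for this
nonnegative integrand. At t = 1 the value is irrelevant (a null set).\<close>
definition gen_integrand :: "real \<Rightarrow> real \<Rightarrow> real" where
  "gen_integrand a t = (1 - t powr (2 * a)) powr (-1/2)"

definition gen_F :: "real \<Rightarrow> real \<Rightarrow> real" where
  "gen_F a s = integral {0..s} (gen_integrand a)"

definition pi_gen :: "real \<Rightarrow> real" where
  "pi_gen a = 2 * integral {0..1} (gen_integrand a)"

definition sin_gen_base :: "real \<Rightarrow> real \<Rightarrow> real" where
  "sin_gen_base a s = (THE y. 0 \<le> y \<and> y \<le> 1 \<and> gen_F a y = s)"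

definition sin_gen_half :: "real \<Rightarrow> real \<Rightarrow> real" where
  "sin_gen_half a s = (if s \<le> pi_gen a / 2 then sin_gen_base a s else sin_gen_base a (pi_gen a - s))"

text \<open>Odd extension to [-pi_a, pi_a] and 2 pi_a-periodic extension to the reals:
r is the representative of s in [-pi_a, pi_a).\<close>
definition sin_gen :: "real \<Rightarrow> real \<Rightarrow> real" where
  "sin_gen a s = (let p = pi_gen a; r = s - 2 * p * of_int \<lfloor>(s + p) / (2 * p)\<rfloor>
                  in sgn r * sin_gen_half a \<bar>r\<bar>)"

definition cos_gen :: "real \<Rightarrow> real \<Rightarrow> real" where
  "cos_gen a s = deriv (sin_gen a) s"

definition tan_gen :: "real \<Rightarrow> real \<Rightarrow> real" where
  "tan_gen a s = sin_gen a s / cos_gen a s"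

end

theory Submission
  imports Defs
begin

text \<open>
Let \<open>g = tan\<^sub>a - id\<close>. For \<open>y \<in> [0, \<pi>\<^sub>a/2)\<close> write \<open>y = F u\<close> with \<open>u = sin\<^sub>a y \<in> [0, 1)\<close>,
where \<open>F\<close> is the primitive of the integrand \<open>f\<close>. Then \<open>cos\<^sub>a y = sqrt (1 - u^(2a)) = 1 / f u\<close>,
so \<open>g y = u f u - F u\<close>, which is strictly increasing in \<open>u\<close> because \<open>F\<close> is convex. As \<open>g\<close>
is odd, it is strictly increasing on \<open>(-\<pi>\<^sub>a/2, \<pi>\<^sub>a/2)\<close>.

A shift by \<open>\<pi>\<^sub>a\<close> changes the signs of both \<open>sin\<^sub>a\<close> and \<open>cos\<^sub>a\<close>, so \<open>tan\<^sub>a\<close> is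
\<open>\<pi>\<^sub>a\<close>-periodic, and where \<open>cos\<^sub>a\<close> does not vanish a point is congruent modulo \<open>\<pi>\<^sub>a\<close> to a
point of the open interval. Reducing \<open>\<phi>\<close> and \<open>\<zeta> + \<phi>\<close> to \<open>y\<^sub>0\<close> and \<open>y\<close>, the equation
becomes \<open>g y - g y\<^sub>0 = m \<pi>\<^sub>a\<close> with \<open>\<zeta> = y - y\<^sub>0 + m \<pi>\<^sub>a\<close>. If \<open>m \<noteq> 0\<close>, monotonicity
puts \<open>y - y\<^sub>0\<close> on the side of \<open>m\<close>, so \<open>\<bar>\<zeta>\<bar> \<ge> \<pi>\<^sub>a\<close>. Hence \<open>m = 0\<close>, and injectivity
of \<open>g\<close> gives \<open>y = y\<^sub>0\<close>, that is \<open>\<zeta> = 0\<close>.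
\<close>

lemma DERIV_from_derivative_limit:
  fixes f g :: "real \<Rightarrow> real"
  assumes "isCont f x" and "\<forall>\<^sub>F t in at x. DERIV f t :> g t" and "(g \<longlongrightarrow> L) (at x)"
  shows "DERIV f x :> L"
proof -
  have "((\<lambda>t. (f t - f x) / (t - x)) \<longlongrightarrow> L) (at x)"
  proof (rule lhopital[where f' = g and g' = "\<lambda>_. 1"])
    show "((\<lambda>t. f t - f x) \<longlongrightarrow> 0) (at x)"
      using tendsto_diff[OF isContD[OF assms(1)] tendsto_const[of "f x"]] by simp
    show "((\<lambda>t. t - x) \<longlongrightarrow> 0) (at x)"
      by (rule LIM_zero) (rule tendsto_ident_at)
    show "\<forall>\<^sub>F t in at x. t - x \<noteq> 0"
      by (simp add: eventually_at_filter)
    show "\<forall>\<^sub>F t in at x. DERIV (\<lambda>t. f t - f x) t :> g t"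
      using assms(2) by eventually_elim (auto intro!: derivative_eq_intros)
    show "\<forall>\<^sub>F t in at x. DERIV (\<lambda>t. t - x) t :> 1"
      by (intro always_eventually allI) (auto intro!: derivative_eq_intros)
  qed (use assms(3) in auto)
  then show ?thesis
    by (simp add: has_field_derivative_iff)
qed

lemma decompose_mod_period:
  fixes x c L :: real
  assumes "0 < L"
  obtains k :: int and y where "x = y + of_int k * L" and "c \<le> y" and "y < c + L"
proof -
  define k where "k = \<lfloor>(x - c) / L\<rfloor>"
  have "of_int k \<le> (x - c) / L" "(x - c) / L < of_int k + 1"
    unfolding k_def by linarith+
  then have "c \<le> x - of_int k * L" "x - of_int k * L < c + L"
    using assms by (auto simp: field_simps)
  then show thesis
    by (intro that[of "x - of_int k * L" k]) auto
qed

lemma strict_mono_on_symmetric_interval: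
  fixes g :: "real \<Rightarrow> real"
  assumes mono: "strict_mono_on {0..<c} g" and odd: "\<And>x. \<bar>x\<bar> < c \<Longrightarrow> g (- x) = - g x"
  shows "strict_mono_on {-c<..<c} g"
proof (rule strict_mono_onI)
  fix x y assume x: "x \<in> {-c<..<c}" and y: "y \<in> {-c<..<c}" and "x < y"
  consider "0 \<le> x" | "y \<le> 0" | "x < 0" "0 < y" by linarith
  then show "g x < g y"
  proof cases
    case 1
    then show ?thesis using strict_mono_onD[OF mono] x y \<open>x < y\<close> by simp
  next
    case 2
    then have "g (- y) < g (- x)" using strict_mono_onD[OF mono] x y \<open>x < y\<close> by simp
    then show ?thesis using odd[of x] odd[of y] x y by (simp add: abs_less_iff)
  next
    case 3
    then have "g 0 < g (- x)" "g 0 < g y" using strict_mono_onD[OF mono] x y by auto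
    then show ?thesis using odd[of x] odd[of 0] x by (simp add: abs_less_iff)
  qed
qed

lemma strict_mono_on_diff_eq_int_multiple:
  fixes g :: "real \<Rightarrow> real"
  assumes mono: "strict_mono_on I g" and xy: "x \<in> I" "y \<in> I" and "0 < L"
    and diff: "g x - g y = of_int m * L" and small: "\<bar>x - y + of_int m * L\<bar> < L"
  shows "m = 0" and "x = y"
proof -
  have less_iff: "g u < g v \<longleftrightarrow> u < v" if "u \<in> {x, y}" "v \<in> {x, y}" for u v
    using strict_mono_on_less[OF mono] xy that by blast
  show "m = 0"
  proof (rule ccontr)
    assume "m \<noteq> 0"
    then consider "1 \<le> m" | "m \<le> -1" by linarith
    then show False
    proof cases
      case 1
      then have "L \<le> of_int m * L" using \<open>0 < L\<close> by simp
      then have "g y < g x" using diff \<open>0 < L\<close> by linarith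
      then have "y < x" using less_iff[of y x] by simp
      then show False using small \<open>L \<le> of_int m * L\<close> by linarith
    next
      case 2
      then have "of_int m * L \<le> - L"
        using mult_right_mono[of "of_int m" "-1" L] \<open>0 < L\<close> by simp
      then have "g x < g y" using diff \<open>0 < L\<close> by linarith
      then have "x < y" using less_iff[of x y] by simp
      then show False using small \<open>of_int m * L \<le> - L\<close> by linarith
    qed
  qed
  then show "x = y" using diff strict_mono_on_eq[OF mono xy] by simp
qed

lemma has_integral_one_minus_powr_neg_half: "((\<lambda>t::real. (1 - t) powr (-1/2)) has_integral 2) {0..1}"
proof -
  have "((\<lambda>t::real. (1 - t) powr (-1/2)) has_integral (-2 * sqrt (1 - 1) - (-2 * sqrt (1 - 0)))) {0..1}"
  proof (rule fundamental_theorem_of_calculus_interior)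
    show "continuous_on {0..1::real} (\<lambda>t. -2 * sqrt (1 - t))"
      by (intro continuous_intros)
    fix x :: real assume x: "x \<in> {0<..<1}"
    have "((\<lambda>t. -2 * sqrt (1 - t)) has_real_derivative inverse (sqrt (1 - x))) (at x)"
      using x by (auto intro!: derivative_eq_intros)
    moreover have "inverse (sqrt (1 - x)) = (1 - x) powr (-1/2)"
      using x by (simp add: powr_minus powr_half_sqrt[symmetric])
    ultimately show "((\<lambda>t. -2 * sqrt (1 - t)) has_vector_derivative (1 - x) powr (-1/2)) (at x)"
      by (simp add: has_real_derivative_iff_has_vector_derivative)
  qed simp
  then show ?thesis by simp
qed

locale gen_trig =
  fixes a :: real
  assumes one_le_a: "1 \<le> a"
begin

abbreviation \<pi>\<^sub>a :: real where "\<pi>\<^sub>a \<equiv> pi_gen a"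

section \<open>The integrand and its primitive\<close>

lemma powr_two_a_less_one: "0 \<le> t \<Longrightarrow> t < 1 \<Longrightarrow> t powr (2 * a) < 1"
  using powr_less_mono2[of "2 * a" t 1] one_le_a by simp

lemma gen_integrand_eq:
  "0 \<le> t \<Longrightarrow> t < 1 \<Longrightarrow> gen_integrand a t = inverse (sqrt (1 - t powr (2 * a)))"
  using powr_two_a_less_one[of t] unfolding gen_integrand_def
  by (simp add: powr_minus powr_half_sqrt[symmetric])

lemma gen_integrand_nonneg: "0 \<le> gen_integrand a t"
  unfolding gen_integrand_def by simp

lemma gen_integrand_ge_one: "0 \<le> t \<Longrightarrow> t < 1 \<Longrightarrow> 1 \<le> gen_integrand a t"
  using powr_two_a_less_one[of t] by (simp add: gen_integrand_eq one_le_inverse)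

lemma gen_integrand_strict_mono:
  assumes "0 \<le> s" "s < t" "t < 1"
  shows "gen_integrand a s < gen_integrand a t"
proof -
  have "s powr (2 * a) < t powr (2 * a)"
    using powr_less_mono2[of "2 * a" s t] assms one_le_a by simp
  then have "0 < sqrt (1 - t powr (2 * a))" "sqrt (1 - t powr (2 * a)) < sqrt (1 - s powr (2 * a))"
    using powr_two_a_less_one[of t] assms by auto
  then show ?thesis
    using assms by (simp add: gen_integrand_eq less_imp_inverse_less)
qed

lemma gen_integrand_le: "0 \<le> t \<Longrightarrow> t \<le> 1 \<Longrightarrow> gen_integrand a t \<le> (1 - t) powr (-1/2)"
proof (cases "t = 1")
  case False
  assume t: "0 \<le> t" "t \<le> 1"
  have "t powr (2 * a) \<le> t powr 1" using powr_mono'[of 1 "2 * a" t] t one_le_a by simp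
  then have "(1 - t powr (2 * a)) powr (-1/2) \<le> (1 - t) powr (-1/2)"
    using t False by (intro powr_mono2') auto
  then show ?thesis by (simp add: gen_integrand_def)
qed (simp add: gen_integrand_def)

lemma continuous_on_gen_integrand:
  assumes "b < 1"
  shows "continuous_on {0..b} (gen_integrand a)"
proof -
  have "0 < 1 - t powr (2 * a)" if "t \<in> {0..b}" for t
    using powr_two_a_less_one[of t] that assms by simp
  then show ?thesis
    unfolding gen_integrand_def using one_le_a
    by (intro continuous_on_powr' continuous_intros) force+
qed

lemma gen_integrand_integrable:
  assumes "0 \<le> x" "y \<le> 1"
  shows "gen_integrand a integrable_on {x..y}"
proof -
  have "gen_integrand a \<in> borel_measurable borel"
    unfolding gen_integrand_def by measurable
  then have "gen_integrand a \<in> borel_measurable (lebesgue_on {0..1})"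
    by (simp add: measurable_completion measurable_restrict_space1)
  then have "gen_integrand a integrable_on {0..1}"
    by (rule measurable_bounded_by_integrable_imp_integrable[OF _
          has_integral_integrable[OF has_integral_one_minus_powr_neg_half]])
      (use gen_integrand_nonneg gen_integrand_le in auto)
  then show ?thesis
    by (rule integrable_on_subinterval) (use assms in auto)
qed

lemma continuous_on_gen_F: "continuous_on {0..1} (gen_F a)"
  unfolding gen_F_def
  by (rule indefinite_integral_continuous_1[OF gen_integrand_integrable]) auto

lemma DERIV_gen_F:
  assumes "0 < y" "y < 1"
  shows "DERIV (gen_F a) y :> gen_integrand a y"
proof -
  define b where "b = (y + 1) / 2"
  have b: "y < b" "b < 1" using assms by (auto simp: b_def)
  have "(gen_F a has_real_derivative gen_integrand a y) (at y within {0..b})"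
    unfolding gen_F_def
    by (rule integral_has_real_derivative[OF continuous_on_gen_integrand]) (use assms b in auto)
  then show ?thesis
    using at_within_Icc_at[of 0 y b] assms b by simp
qed

lemma gen_F_0: "gen_F a 0 = 0"
  unfolding gen_F_def by simp

lemma gen_F_1: "gen_F a 1 = \<pi>\<^sub>a / 2"
  unfolding pi_gen_def gen_F_def by simp

lemma gen_F_diff:
  "0 \<le> x \<Longrightarrow> x \<le> y \<Longrightarrow> y \<le> 1 \<Longrightarrow> gen_F a y - gen_F a x = integral {x..y} (gen_integrand a)"
  unfolding gen_F_def
  using Henstock_Kurzweil_Integration.integral_combine[where a = 0 and c = x and b = y
      and f = "gen_integrand a"]
    gen_integrand_integrable[of 0 y]
  by simp

lemma gen_F_diff_ge:
  assumes "0 \<le> x" "x \<le> y" "y < 1"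
  shows "y - x \<le> gen_F a y - gen_F a x"
proof -
  have "integral {x..y} (\<lambda>_. 1) \<le> integral {x..y} (gen_integrand a)"
    using assms gen_integrand_integrable gen_integrand_ge_one by (intro integral_le) auto
  then show ?thesis
    using gen_F_diff[of x y] assms by simp
qed

lemma gen_F_diff_le:
  assumes "0 \<le> x" "x \<le> y" "y < 1"
  shows "gen_F a y - gen_F a x \<le> (y - x) * gen_integrand a y"
proof -
  have "integral {x..y} (gen_integrand a) \<le> integral {x..y} (\<lambda>_. gen_integrand a y)"
  proof (rule integral_le)
    fix t assume "t \<in> {x..y}"
    then show "gen_integrand a t \<le> gen_integrand a y"
      using gen_integrand_strict_mono[of t y] assms by (cases "t = y") auto
  qed (use assms gen_integrand_integrable in auto)
  then show ?thesis
    using gen_F_diff[of x y] assms by simp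
qed

lemma gen_F_mono: "0 \<le> x \<Longrightarrow> x \<le> y \<Longrightarrow> y \<le> 1 \<Longrightarrow> gen_F a x \<le> gen_F a y"
  using gen_F_diff[of x y] integral_nonneg[OF gen_integrand_integrable gen_integrand_nonneg, of x y]
  by simp

lemma gen_F_strict_mono:
  assumes "0 \<le> x" "x < y" "y \<le> 1"
  shows "gen_F a x < gen_F a y"
proof -
  define m where "m = (x + y) / 2"
  have m: "x < m" "m < y" using assms by (auto simp: m_def)
  have "gen_F a x < gen_F a m" using gen_F_diff_ge[of x m] m assms by simp
  also have "\<dots> \<le> gen_F a y" using gen_F_mono[of m y] m assms by simp
  finally show ?thesis .
qed

lemma pi_gen_pos: "0 < \<pi>\<^sub>a"
  using gen_F_strict_mono[of 0 1] gen_F_0 gen_F_1 by simp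

lemma gen_F_inj: "0 \<le> x \<Longrightarrow> x \<le> 1 \<Longrightarrow> 0 \<le> y \<Longrightarrow> y \<le> 1 \<Longrightarrow> gen_F a x = gen_F a y \<Longrightarrow> x = y"
  using gen_F_strict_mono[of x y] gen_F_strict_mono[of y x] by (cases x y rule: linorder_cases) auto

section \<open>The inverse function \<^const>\<open>sin_gen_base\<close>\<close>

lemma sin_gen_base_unique:
  assumes "0 \<le> s" "s \<le> \<pi>\<^sub>a / 2"
  shows "\<exists>!y. 0 \<le> y \<and> y \<le> 1 \<and> gen_F a y = s"
proof -
  obtain y where "0 \<le> y" "y \<le> 1" "gen_F a y = s"
    using IVT'[of "gen_F a" 0 s 1] continuous_on_gen_F gen_F_0 gen_F_1 assms by auto
  then show ?thesis
    using gen_F_inj by blast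
qed

lemma sin_gen_base_bounds: "0 \<le> s \<Longrightarrow> s \<le> \<pi>\<^sub>a / 2 \<Longrightarrow> 0 \<le> sin_gen_base a s \<and> sin_gen_base a s \<le> 1"
  using theI'[OF sin_gen_base_unique] unfolding sin_gen_base_def by blast

lemma gen_F_sin_gen_base: "0 \<le> s \<Longrightarrow> s \<le> \<pi>\<^sub>a / 2 \<Longrightarrow> gen_F a (sin_gen_base a s) = s"
  using theI'[OF sin_gen_base_unique] unfolding sin_gen_base_def by blast

lemma sin_gen_base_gen_F: "0 \<le> y \<Longrightarrow> y \<le> 1 \<Longrightarrow> sin_gen_base a (gen_F a y) = y"
  using the1_equality[OF sin_gen_base_unique] gen_F_mono[of 0 y] gen_F_mono[of y 1] gen_F_0 gen_F_1
  unfolding sin_gen_base_def by simp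

lemma sin_gen_base_0: "sin_gen_base a 0 = 0"
  using sin_gen_base_gen_F[of 0] gen_F_0 by simp

lemma sin_gen_base_half_pi: "sin_gen_base a (\<pi>\<^sub>a / 2) = 1"
  using sin_gen_base_gen_F[of 1] gen_F_1 by simp

lemma sin_gen_base_strict_mono:
  assumes "0 \<le> s" "s < t" "t \<le> \<pi>\<^sub>a / 2"
  shows "sin_gen_base a s < sin_gen_base a t"
proof (rule ccontr)
  assume "\<not> sin_gen_base a s < sin_gen_base a t"
  then have "gen_F a (sin_gen_base a t) \<le> gen_F a (sin_gen_base a s)"
    using gen_F_mono sin_gen_base_bounds[of s] sin_gen_base_bounds[of t] assms by simp
  then show False
    using gen_F_sin_gen_base[of s] gen_F_sin_gen_base[of t] assms by simp
qed

lemma sin_gen_base_less_one: "0 \<le> s \<Longrightarrow> s < \<pi>\<^sub>a / 2 \<Longrightarrow> sin_gen_base a s < 1"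
  using sin_gen_base_strict_mono[of s "\<pi>\<^sub>a / 2"] sin_gen_base_half_pi by simp

lemma sin_gen_base_pos: "0 < s \<Longrightarrow> s \<le> \<pi>\<^sub>a / 2 \<Longrightarrow> 0 < sin_gen_base a s"
  using sin_gen_base_strict_mono[of 0 s] sin_gen_base_0 by simp

lemma continuous_on_sin_gen_base: "continuous_on {0..\<pi>\<^sub>a / 2} (sin_gen_base a)"
proof -
  have "gen_F a ` {0..1} = {0..\<pi>\<^sub>a / 2}"
  proof
    show "gen_F a ` {0..1} \<subseteq> {0..\<pi>\<^sub>a / 2}"
      using gen_F_mono[of 0] gen_F_mono[of _ 1] gen_F_0 gen_F_1 by auto
    show "{0..\<pi>\<^sub>a / 2} \<subseteq> gen_F a ` {0..1}"
      using sin_gen_base_bounds gen_F_sin_gen_base by (force intro: image_eqI[symmetric])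
  qed
  moreover have "continuous_on (gen_F a ` {0..1}) (sin_gen_base a)"
    using sin_gen_base_gen_F by (intro continuous_on_inv[OF continuous_on_gen_F]) auto
  ultimately show ?thesis by simp
qed

lemma DERIV_sin_gen_base:
  assumes "0 < s" "s < \<pi>\<^sub>a / 2"
  shows "DERIV (sin_gen_base a) s :> sqrt (1 - sin_gen_base a s powr (2 * a))"
proof -
  let ?y = "sin_gen_base a s"
  have y: "0 < ?y" "?y < 1"
    using sin_gen_base_pos[of s] sin_gen_base_less_one[of s] assms by auto
  have "DERIV (sin_gen_base a) s :> inverse (gen_integrand a ?y)"
  proof (rule DERIV_inverse_function[where f = "gen_F a" and a = 0 and b = "\<pi>\<^sub>a / 2"])
    show "DERIV (gen_F a) ?y :> gen_integrand a ?y"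
      using DERIV_gen_F y by simp
    show "gen_integrand a ?y \<noteq> 0"
      using gen_integrand_ge_one[of ?y] y by simp
    show "isCont (sin_gen_base a) s"
      using continuous_on_sin_gen_base assms
        continuous_on_interior[of "{0..\<pi>\<^sub>a / 2}" "sin_gen_base a" s] by simp
  qed (use assms gen_F_sin_gen_base in auto)
  then show ?thesis
    using gen_integrand_eq[of ?y] y by simp
qed

section \<open>Symmetries of \<^const>\<open>sin_gen\<close>\<close>

lemma sin_gen_half_reflect: "sin_gen_half a (\<pi>\<^sub>a - t) = sin_gen_half a t"
  unfolding sin_gen_half_def by auto

lemma sin_gen_half_0: "sin_gen_half a 0 = 0"
  unfolding sin_gen_half_def using pi_gen_pos sin_gen_base_0 by simp

lemma sin_gen_half_pi: "sin_gen_half a \<pi>\<^sub>a = 0"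
  using sin_gen_half_reflect[of \<pi>\<^sub>a] sin_gen_half_0 by simp

lemma sin_gen_add_2pi_multiple:
  assumes "-\<pi>\<^sub>a \<le> r" "r < \<pi>\<^sub>a"
  shows "sin_gen a (r + of_int k * (2 * \<pi>\<^sub>a)) = sgn r * sin_gen_half a \<bar>r\<bar>"
proof -
  have "\<lfloor>(r + of_int k * (2 * \<pi>\<^sub>a) + \<pi>\<^sub>a) / (2 * \<pi>\<^sub>a)\<rfloor> = k"
    by (rule floor_unique) (use pi_gen_pos assms in \<open>auto simp: field_simps\<close>)
  then show ?thesis
    unfolding sin_gen_def Let_def by simp
qed

lemma sin_gen_eq_half: "-\<pi>\<^sub>a \<le> x \<Longrightarrow> x < \<pi>\<^sub>a \<Longrightarrow> sin_gen a x = sgn x * sin_gen_half a \<bar>x\<bar>"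
  using sin_gen_add_2pi_multiple[of x 0] by simp

lemma sin_gen_add_pi: "sin_gen a (x + \<pi>\<^sub>a) = - sin_gen a x"
proof -
  obtain k r where x: "x = r + of_int k * (2 * \<pi>\<^sub>a)" and r: "-\<pi>\<^sub>a \<le> r" "r < \<pi>\<^sub>a"
    by (rule decompose_mod_period[where L = "2 * \<pi>\<^sub>a" and c = "-\<pi>\<^sub>a"]) (use pi_gen_pos in auto)
  have sin_x: "sin_gen a x = sgn r * sin_gen_half a \<bar>r\<bar>"
    using sin_gen_add_2pi_multiple[OF r] x by simp
  show ?thesis
  proof (cases "r < 0")
    case True
    have "sin_gen a (x + \<pi>\<^sub>a) = sin_gen a ((r + \<pi>\<^sub>a) + of_int k * (2 * \<pi>\<^sub>a))"
      using x by (simp add: algebra_simps)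
    also have "\<dots> = sgn (r + \<pi>\<^sub>a) * sin_gen_half a \<bar>r + \<pi>\<^sub>a\<bar>"
      using r True by (intro sin_gen_add_2pi_multiple) auto
    also have "sin_gen_half a \<bar>r + \<pi>\<^sub>a\<bar> = sin_gen_half a \<bar>r\<bar>"
      using sin_gen_half_reflect[of "- r"] True r by (simp add: add.commute)
    finally show ?thesis
      using sin_x True r sin_gen_half_pi by (cases "r = - \<pi>\<^sub>a") (auto simp: sgn_if)
  next
    case False
    have "sin_gen a (x + \<pi>\<^sub>a) = sin_gen a ((r - \<pi>\<^sub>a) + of_int (k + 1) * (2 * \<pi>\<^sub>a))"
      using x by (simp add: algebra_simps)
    also have "\<dots> = sgn (r - \<pi>\<^sub>a) * sin_gen_half a \<bar>r - \<pi>\<^sub>a\<bar>"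
      using r False by (intro sin_gen_add_2pi_multiple) auto
    also have "sin_gen_half a \<bar>r - \<pi>\<^sub>a\<bar> = sin_gen_half a \<bar>r\<bar>"
      using sin_gen_half_reflect[of r] False r by simp
    finally show ?thesis
      using sin_x False r sin_gen_half_0 by (cases "r = 0") (auto simp: sgn_if)
  qed
qed

lemma sin_gen_add_int_pi:
  "sin_gen a (x + of_int k * \<pi>\<^sub>a) = (if even k then 1 else -1) * sin_gen a x"
proof (induction k rule: int_induct[where k = 0])
  case (step1 i)
  have "sin_gen a (x + of_int (i + 1) * \<pi>\<^sub>a) = - sin_gen a (x + of_int i * \<pi>\<^sub>a)"
    using sin_gen_add_pi[of "x + of_int i * \<pi>\<^sub>a"] by (simp add: algebra_simps)
  then show ?case using step1 by simp
next
  case (step2 i)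
  have "sin_gen a (x + of_int i * \<pi>\<^sub>a) = - sin_gen a (x + of_int (i - 1) * \<pi>\<^sub>a)"
    using sin_gen_add_pi[of "x + of_int (i - 1) * \<pi>\<^sub>a"] by (simp add: algebra_simps)
  then show ?case using step2 by (auto split: if_splits)
qed simp

lemma reduce_mod_pi:
  obtains k :: int and y where "x = y + of_int k * \<pi>\<^sub>a" and "-\<pi>\<^sub>a / 2 \<le> y" and "y < \<pi>\<^sub>a / 2"
  by (rule decompose_mod_period[where L = \<pi>\<^sub>a and c = "-\<pi>\<^sub>a / 2"]) (use pi_gen_pos in auto)

lemma sin_gen_eq_base: "0 \<le> x \<Longrightarrow> x \<le> \<pi>\<^sub>a / 2 \<Longrightarrow> sin_gen a x = sin_gen_base a x"
  using sin_gen_eq_half[of x] pi_gen_pos sin_gen_base_0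
  by (cases "x = 0") (auto simp: sin_gen_half_def)

lemma sin_gen_eq_neg_base: "-\<pi>\<^sub>a / 2 \<le> x \<Longrightarrow> x \<le> 0 \<Longrightarrow> sin_gen a x = - sin_gen_base a (- x)"
  using sin_gen_eq_half[of x] pi_gen_pos sin_gen_base_0
  by (cases "x = 0") (auto simp: sin_gen_half_def)

lemma sin_gen_eq_neg_base_shift:
  "-\<pi>\<^sub>a < x \<Longrightarrow> x \<le> -\<pi>\<^sub>a / 2 \<Longrightarrow> sin_gen a x = - sin_gen_base a (x + \<pi>\<^sub>a)"
  using sin_gen_eq_half[of x] pi_gen_pos
  by (cases "x = -\<pi>\<^sub>a / 2") (auto simp: sin_gen_half_def add.commute)

lemma sin_gen_minus: "\<bar>x\<bar> \<le> \<pi>\<^sub>a / 2 \<Longrightarrow> sin_gen a (- x) = - sin_gen a x"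
  using sin_gen_eq_base[of x] sin_gen_eq_neg_base[of x]
    sin_gen_eq_base[of "- x"] sin_gen_eq_neg_base[of "- x"]
  by (cases "0 \<le> x") auto

lemma abs_sin_gen_eq_base: "\<bar>x\<bar> \<le> \<pi>\<^sub>a / 2 \<Longrightarrow> \<bar>sin_gen a x\<bar> = sin_gen_base a \<bar>x\<bar>"
  using sin_gen_eq_base[of x] sin_gen_eq_neg_base[of x] sin_gen_base_bounds[of "\<bar>x\<bar>"]
  by (cases "0 \<le> x") auto

lemma abs_sin_gen_le_one: "\<bar>sin_gen a x\<bar> \<le> 1"
proof -
  obtain k y where "x = y + of_int k * \<pi>\<^sub>a" "-\<pi>\<^sub>a / 2 \<le> y" "y < \<pi>\<^sub>a / 2"
    by (rule reduce_mod_pi)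
  then show ?thesis
    using sin_gen_add_int_pi[of y k] abs_sin_gen_eq_base[of y] sin_gen_base_bounds[of "\<bar>y\<bar>"] by auto
qed

section \<open>The derivative of \<^const>\<open>sin_gen\<close>\<close>

text \<open>By the Pythagorean identity \<open>\<bar>sin\<^sub>a\<bar>^(2a) + cos\<^sub>a^2 = 1\<close> this is \<open>\<bar>cos\<^sub>a\<bar>\<close>.\<close>

definition abs_cos :: "real \<Rightarrow> real" where
  "abs_cos x = sqrt (1 - \<bar>sin_gen a x\<bar> powr (2 * a))"

lemma abs_cos_nonneg: "0 \<le> abs_cos x"
  unfolding abs_cos_def using powr_le1[of "2 * a" "\<bar>sin_gen a x\<bar>"] abs_sin_gen_le_one[of x] one_le_a
  by simp

lemma abs_cos_pos: "\<bar>y\<bar> < \<pi>\<^sub>a / 2 \<Longrightarrow> 0 < abs_cos y"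
  unfolding abs_cos_def
  using abs_sin_gen_eq_base[of y] sin_gen_base_less_one[of "\<bar>y\<bar>"] sin_gen_base_bounds[of "\<bar>y\<bar>"]
    powr_two_a_less_one[of "sin_gen_base a \<bar>y\<bar>"]
  by simp

lemma abs_cos_neg_half_pi: "abs_cos (- \<pi>\<^sub>a / 2) = 0"
  unfolding abs_cos_def using sin_gen_eq_neg_base[of "- \<pi>\<^sub>a / 2"] sin_gen_base_half_pi pi_gen_pos
  by simp

lemma isCont_abs_cos: "isCont (sin_gen a) x \<Longrightarrow> isCont abs_cos x"
  unfolding isCont_def abs_cos_def using one_le_a by (intro tendsto_intros) auto

lemma isCont_sin_gen_0: "isCont (sin_gen a) 0"
proof -
  let ?q = "\<pi>\<^sub>a / 2"
  have "continuous_on ({-?q..0} \<union> {0..?q})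
          (\<lambda>t. if t \<le> 0 then - sin_gen_base a (- t) else sin_gen_base a t)"
    using continuous_on_sin_gen_base sin_gen_base_0
    by (intro continuous_on_cases continuous_intros continuous_on_compose2[OF continuous_on_sin_gen_base]) auto
  moreover have "{-?q..0} \<union> {0..?q} = {-?q..?q}" by auto
  ultimately have "continuous_on {-?q..?q} (sin_gen a)"
    by (auto elim!: continuous_on_eq simp: sin_gen_eq_base sin_gen_eq_neg_base)
  then show ?thesis
    using continuous_on_interior[of "{-?q..?q}" "sin_gen a" 0] pi_gen_pos by simp
qed

lemma isCont_sin_gen_neg_half_pi: "isCont (sin_gen a) (- \<pi>\<^sub>a / 2)"
proof -
  let ?q = "\<pi>\<^sub>a / 2"
  have "continuous_on ({-3 * ?q / 2..-?q} \<union> {-?q..0})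
          (\<lambda>t. if t \<le> -?q then - sin_gen_base a (t + \<pi>\<^sub>a) else - sin_gen_base a (- t))"
    by (intro continuous_on_cases continuous_intros continuous_on_compose2[OF continuous_on_sin_gen_base])
      auto
  moreover have "{-3 * ?q / 2..-?q} \<union> {-?q..0} = {-3 * ?q / 2..0}" using pi_gen_pos by auto
  ultimately have "continuous_on {-3 * ?q / 2..0} (sin_gen a)"
    using pi_gen_pos
    by (auto elim!: continuous_on_eq simp: sin_gen_eq_neg_base_shift sin_gen_eq_neg_base)
  then show ?thesis
    using continuous_on_interior[of "{-3 * ?q / 2..0}" "sin_gen a" "-?q"] pi_gen_pos by simp
qed

lemma DERIV_sin_gen_pos:
  assumes "0 < t" "t < \<pi>\<^sub>a / 2"
  shows "DERIV (sin_gen a) t :> abs_cos t"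
proof -
  have "DERIV (sin_gen_base a) t :> abs_cos t"
    using DERIV_sin_gen_base[OF assms] sin_gen_eq_base[of t] sin_gen_base_bounds[of t] assms
    by (simp add: abs_cos_def)
  then show ?thesis
    by (rule has_field_derivative_transform_within_open[of _ _ _ "{0<..<\<pi>\<^sub>a / 2}"])
      (use assms sin_gen_eq_base in auto)
qed

lemma DERIV_sin_gen_neg:
  assumes "- \<pi>\<^sub>a / 2 < t" "t < 0"
  shows "DERIV (sin_gen a) t :> abs_cos t"
proof -
  have "DERIV (sin_gen_base a) (- t) :> abs_cos t"
    using DERIV_sin_gen_base[of "- t"] sin_gen_eq_neg_base[of t] sin_gen_base_bounds[of "- t"] assms
    by (simp add: abs_cos_def)
  then have "DERIV (\<lambda>t. sin_gen_base a (- t)) t :> - abs_cos t"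
    unfolding DERIV_mirror .
  then have "DERIV (\<lambda>t. - sin_gen_base a (- t)) t :> abs_cos t"
    using DERIV_minus by fastforce
  then show ?thesis
    by (rule has_field_derivative_transform_within_open[of _ _ _ "{- \<pi>\<^sub>a / 2<..<0}"])
      (use assms sin_gen_eq_neg_base in auto)
qed

lemma DERIV_sin_gen_neg_shift:
  assumes "- \<pi>\<^sub>a < t" "t < - \<pi>\<^sub>a / 2"
  shows "DERIV (sin_gen a) t :> - abs_cos t"
proof -
  have "DERIV (sin_gen_base a) (t + \<pi>\<^sub>a) :> abs_cos t"
    using DERIV_sin_gen_base[of "t + \<pi>\<^sub>a"] sin_gen_eq_neg_base_shift[of t]
      sin_gen_base_bounds[of "t + \<pi>\<^sub>a"] assms
    by (simp add: abs_cos_def)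
  then have "DERIV (\<lambda>t. - sin_gen_base a (t + \<pi>\<^sub>a)) t :> - abs_cos t"
    unfolding DERIV_shift by (rule DERIV_minus)
  then show ?thesis
    by (rule has_field_derivative_transform_within_open[of _ _ _ "{- \<pi>\<^sub>a<..<- \<pi>\<^sub>a / 2}"])
      (use assms sin_gen_eq_neg_base_shift in auto)
qed

lemma DERIV_sin_gen_0: "DERIV (sin_gen a) 0 :> abs_cos 0"
proof (rule DERIV_from_derivative_limit[OF isCont_sin_gen_0])
  show "\<forall>\<^sub>F t in at 0. DERIV (sin_gen a) t :> abs_cos t"
    unfolding eventually_at
  proof (intro exI[of _ "\<pi>\<^sub>a / 2"] conjI ballI impI)
    fix t :: real assume "t \<noteq> 0 \<and> dist t 0 < \<pi>\<^sub>a / 2"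
    then show "DERIV (sin_gen a) t :> abs_cos t"
      using DERIV_sin_gen_pos[of t] DERIV_sin_gen_neg[of t] by (cases "0 < t") auto
  qed (use pi_gen_pos in simp)
  show "(abs_cos \<longlongrightarrow> abs_cos 0) (at 0)"
    using isCont_abs_cos[OF isCont_sin_gen_0] by (simp add: isCont_def)
qed

text \<open>At \<open>-\<pi>\<^sub>a/2\<close> the inverse function \<^const>\<open>sin_gen_base\<close> has infinite slope, so the derivative
  is obtained as the common limit 0 of the derivatives \<open>\<plusminus>abs_cos\<close> on both sides.\<close>

lemma DERIV_sin_gen_neg_half_pi: "DERIV (sin_gen a) (- \<pi>\<^sub>a / 2) :> 0"
proof (rule DERIV_from_derivative_limit[OF isCont_sin_gen_neg_half_pi])
  let ?g = "\<lambda>t. if t < - \<pi>\<^sub>a / 2 then - abs_cos t else abs_cos t"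
  show "\<forall>\<^sub>F t in at (- \<pi>\<^sub>a / 2). DERIV (sin_gen a) t :> ?g t"
    unfolding eventually_at
  proof (intro exI[of _ "\<pi>\<^sub>a / 2"] conjI ballI impI)
    fix t :: real assume t: "t \<noteq> - \<pi>\<^sub>a / 2 \<and> dist t (- \<pi>\<^sub>a / 2) < \<pi>\<^sub>a / 2"
    then have "- \<pi>\<^sub>a < t" "t < 0"
      unfolding dist_real_def abs_less_iff by linarith+
    show "DERIV (sin_gen a) t :> ?g t"
    proof (cases "t < - \<pi>\<^sub>a / 2")
      case True
      then show ?thesis using DERIV_sin_gen_neg_shift[of t] \<open>- \<pi>\<^sub>a < t\<close> by simp
    next
      case False
      then show ?thesis using DERIV_sin_gen_neg[of t] \<open>t < 0\<close> t by simp
    qed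
  qed (use pi_gen_pos in simp)
  have "(\<lambda>t. \<bar>?g t\<bar>) = abs_cos"
    using abs_cos_nonneg by (auto simp: fun_eq_iff)
  then have "((\<lambda>t. \<bar>?g t\<bar>) \<longlongrightarrow> 0) (at (- \<pi>\<^sub>a / 2))"
    using isCont_abs_cos[OF isCont_sin_gen_neg_half_pi] abs_cos_neg_half_pi by (simp add: isCont_def)
  then show "(?g \<longlongrightarrow> 0) (at (- \<pi>\<^sub>a / 2))"
    by (rule tendsto_rabs_zero_cancel)
qed

lemma DERIV_sin_gen_reduced:
  assumes "- \<pi>\<^sub>a / 2 \<le> y" "y < \<pi>\<^sub>a / 2"
  shows "DERIV (sin_gen a) y :> abs_cos y"
proof -
  consider "y = - \<pi>\<^sub>a / 2" | "- \<pi>\<^sub>a / 2 < y" "y < 0" | "y = 0" | "0 < y"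
    using assms by linarith
  then show ?thesis
  proof cases
    case 1
    then show ?thesis using DERIV_sin_gen_neg_half_pi abs_cos_neg_half_pi by simp
  next
    case 2
    then show ?thesis by (rule DERIV_sin_gen_neg)
  next
    case 3
    then show ?thesis using DERIV_sin_gen_0 by simp
  next
    case 4
    then show ?thesis using assms(2) by (rule DERIV_sin_gen_pos)
  qed
qed

lemma DERIV_sin_gen_add_int_pi:
  assumes "- \<pi>\<^sub>a / 2 \<le> y" "y < \<pi>\<^sub>a / 2"
  shows "DERIV (sin_gen a) (y + of_int k * \<pi>\<^sub>a) :> (if even k then 1 else -1) * abs_cos y"
proof -
  let ?s = "if even k then 1 else -1 :: real"
  have "DERIV (\<lambda>t. sin_gen a (t - of_int k * \<pi>\<^sub>a)) (y + of_int k * \<pi>\<^sub>a) :> abs_cos y"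
    using DERIV_sin_gen_reduced[OF assms] DERIV_shift[where x = "y + of_int k * \<pi>\<^sub>a" and z = "- of_int k * \<pi>\<^sub>a"]
    by simp
  then have "DERIV (\<lambda>t. ?s * sin_gen a (t - of_int k * \<pi>\<^sub>a)) (y + of_int k * \<pi>\<^sub>a) :> ?s * abs_cos y"
    by (rule DERIV_cmult)
  moreover have "(\<lambda>t. ?s * sin_gen a (t - of_int k * \<pi>\<^sub>a)) = sin_gen a"
  proof
    fix t
    show "?s * sin_gen a (t - of_int k * \<pi>\<^sub>a) = sin_gen a t"
      using sin_gen_add_int_pi[of "t - of_int k * \<pi>\<^sub>a" k] by simp
  qed
  ultimately show ?thesis by simp
qed

lemma cos_gen_add_int_pi:
  "- \<pi>\<^sub>a / 2 \<le> y \<Longrightarrow> y < \<pi>\<^sub>a / 2 \<Longrightarrow>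
    cos_gen a (y + of_int k * \<pi>\<^sub>a) = (if even k then 1 else -1) * abs_cos y"
  unfolding cos_gen_def by (rule DERIV_imp_deriv[OF DERIV_sin_gen_add_int_pi])

lemma cos_gen_reduced: "- \<pi>\<^sub>a / 2 \<le> y \<Longrightarrow> y < \<pi>\<^sub>a / 2 \<Longrightarrow> cos_gen a y = abs_cos y"
  using cos_gen_add_int_pi[of y 0] by simp

lemma tan_gen_add_int_pi:
  "- \<pi>\<^sub>a / 2 \<le> y \<Longrightarrow> y < \<pi>\<^sub>a / 2 \<Longrightarrow> tan_gen a (y + of_int k * \<pi>\<^sub>a) = tan_gen a y"
  unfolding tan_gen_def using cos_gen_add_int_pi[of y k] cos_gen_reduced[of y] sin_gen_add_int_pi[of y k]
  by auto

lemma cos_gen_nonzero_reduce: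
  assumes "cos_gen a x \<noteq> 0"
  obtains k :: int and y where "x = y + of_int k * \<pi>\<^sub>a" and "\<bar>y\<bar> < \<pi>\<^sub>a / 2"
proof -
  obtain k y where x: "x = y + of_int k * \<pi>\<^sub>a" "- \<pi>\<^sub>a / 2 \<le> y" "y < \<pi>\<^sub>a / 2"
    by (rule reduce_mod_pi)
  have "y \<noteq> - \<pi>\<^sub>a / 2"
    using assms x cos_gen_add_int_pi[of y k] abs_cos_neg_half_pi by auto
  then show thesis
    using that x by auto
qed

lemma cos_gen_nonzero: "\<bar>y\<bar> < \<pi>\<^sub>a / 2 \<Longrightarrow> cos_gen a (y + of_int k * \<pi>\<^sub>a) \<noteq> 0"
  using cos_gen_add_int_pi[of y k] abs_cos_pos[of y] by auto

lemma cos_gen_nonzero_off_poles: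
  assumes "0 \<le> x" "x < 2 * \<pi>\<^sub>a" "x \<noteq> \<pi>\<^sub>a / 2" "x \<noteq> 3 * \<pi>\<^sub>a / 2"
  shows "cos_gen a x \<noteq> 0"
proof -
  obtain k y where x: "x = y + of_int k * \<pi>\<^sub>a" "- \<pi>\<^sub>a / 2 \<le> y" "y < \<pi>\<^sub>a / 2"
    by (rule reduce_mod_pi)
  have "y \<noteq> - \<pi>\<^sub>a / 2"
  proof
    assume "y = - \<pi>\<^sub>a / 2"
    then have x_eq: "x = (of_int k - 1 / 2) * \<pi>\<^sub>a"
      using x(1) by (simp add: algebra_simps)
    then have "0 < k" "k < 3"
      using assms(1,2) pi_gen_pos by (auto simp: zero_le_mult_iff mult_less_cancel_right)
    then have "k = 1 \<or> k = 2" by auto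
    then show False
      using x_eq assms(3,4) by auto
  qed
  then have "\<bar>y\<bar> < \<pi>\<^sub>a / 2"
    using x(2,3) by (auto simp: abs_less_iff)
  then show ?thesis
    unfolding x(1) by (rule cos_gen_nonzero)
qed

section \<open>Monotonicity of \<^const>\<open>tan_gen\<close> minus the identity\<close>

lemma tan_gen_gen_F:
  assumes "0 \<le> u" "u < 1"
  shows "tan_gen a (gen_F a u) = u * gen_integrand a u"
proof -
  let ?y = "gen_F a u"
  have y: "0 \<le> ?y" "?y < \<pi>\<^sub>a / 2"
    using gen_F_mono[of 0 u] gen_F_strict_mono[of u 1] gen_F_0 gen_F_1 assms by auto
  have sin_y: "sin_gen a ?y = u"
    using sin_gen_eq_base[of ?y] sin_gen_base_gen_F[of u] y assms by simp
  then have "cos_gen a ?y = sqrt (1 - u powr (2 * a))"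
    using cos_gen_reduced[of ?y] y assms pi_gen_pos by (simp add: abs_cos_def)
  then show ?thesis
    unfolding tan_gen_def using sin_y gen_integrand_eq[OF assms] by (simp add: divide_inverse)
qed

lemma mult_gen_integrand_minus_gen_F_strict_mono:
  assumes "0 \<le> u" "u < v" "v < 1"
  shows "u * gen_integrand a u - gen_F a u < v * gen_integrand a v - gen_F a v"
proof -
  \<comment> \<open>convexity of \<^const>\<open>gen_F\<close>, i.e. \<open>F t - F s \<le> (t - s) f t\<close>, rearranged\<close>
  have step: "s * gen_integrand a s - gen_F a s + s * (gen_integrand a t - gen_integrand a s)
      \<le> t * gen_integrand a t - gen_F a t" if "0 \<le> s" "s \<le> t" "t < 1" for s t
    using gen_F_diff_le[OF that] by (simp add: algebra_simps)
  define w where "w = (u + v) / 2"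
  have w: "u < w" "w < v" using assms by (auto simp: w_def)
  have "0 \<le> u * (gen_integrand a w - gen_integrand a u)"
    using gen_integrand_strict_mono[of u w] assms w by simp
  then have "u * gen_integrand a u - gen_F a u \<le> w * gen_integrand a w - gen_F a w"
    using step[of u w] assms w by simp
  also have "0 < w * (gen_integrand a v - gen_integrand a w)"
    using gen_integrand_strict_mono[of w v] assms w by simp
  then have "w * gen_integrand a w - gen_F a w < v * gen_integrand a v - gen_F a v"
    using step[of w v] assms w by simp
  finally show ?thesis .
qed

lemma strict_mono_on_tan_gen_minus_id_nonneg: "strict_mono_on {0..<\<pi>\<^sub>a / 2} (\<lambda>y. tan_gen a y - y)"
proof (rule strict_mono_onI)
  fix y z assume y: "y \<in> {0..<\<pi>\<^sub>a / 2}" and z: "z \<in> {0..<\<pi>\<^sub>a / 2}" and "y < z"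
  let ?u = "sin_gen_base a y" and ?v = "sin_gen_base a z"
  have uv: "0 \<le> ?u" "?u < ?v" "?v < 1"
    using sin_gen_base_bounds[of y] sin_gen_base_strict_mono[of y z] sin_gen_base_less_one[of z] y z \<open>y < z\<close>
    by auto
  have "tan_gen a y - y = ?u * gen_integrand a ?u - gen_F a ?u"
    using tan_gen_gen_F[of ?u] gen_F_sin_gen_base[of y] uv y by simp
  moreover have "tan_gen a z - z = ?v * gen_integrand a ?v - gen_F a ?v"
    using tan_gen_gen_F[of ?v] gen_F_sin_gen_base[of z] uv z by simp
  ultimately show "tan_gen a y - y < tan_gen a z - z"
    using mult_gen_integrand_minus_gen_F_strict_mono[OF uv] by simp
qed

lemma tan_gen_minus: "\<bar>y\<bar> < \<pi>\<^sub>a / 2 \<Longrightarrow> tan_gen a (- y) = - tan_gen a y"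
  unfolding tan_gen_def using sin_gen_minus[of y] cos_gen_reduced[of y] cos_gen_reduced[of "- y"]
  by (simp add: abs_cos_def abs_less_iff)

lemma strict_mono_on_tan_gen_minus_id: "strict_mono_on {- (\<pi>\<^sub>a / 2)<..<\<pi>\<^sub>a / 2} (\<lambda>y. tan_gen a y - y)"
  by (rule strict_mono_on_symmetric_interval[OF strict_mono_on_tan_gen_minus_id_nonneg])
    (simp add: tan_gen_minus)

lemma tan_gen_difference_eq_imp_zero:
  assumes "cos_gen a \<phi> \<noteq> 0" "cos_gen a (\<zeta> + \<phi>) \<noteq> 0" "\<bar>\<zeta>\<bar> < \<pi>\<^sub>a"
    and "tan_gen a (\<zeta> + \<phi>) - tan_gen a \<phi> = \<zeta>"
  shows "\<zeta> = 0"
proof -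
  obtain k0 y0 where \<phi>: "\<phi> = y0 + of_int k0 * \<pi>\<^sub>a" and y0: "\<bar>y0\<bar> < \<pi>\<^sub>a / 2"
    using cos_gen_nonzero_reduce[OF assms(1)] by blast
  obtain k y where \<zeta>\<phi>: "\<zeta> + \<phi> = y + of_int k * \<pi>\<^sub>a" and y: "\<bar>y\<bar> < \<pi>\<^sub>a / 2"
    using cos_gen_nonzero_reduce[OF assms(2)] by blast
  have \<zeta>_eq: "\<zeta> = y - y0 + of_int (k - k0) * \<pi>\<^sub>a"
    using \<zeta>\<phi> \<phi> by (simp add: algebra_simps)
  have diff: "(tan_gen a y - y) - (tan_gen a y0 - y0) = of_int (k - k0) * \<pi>\<^sub>a"
    using assms(4) \<zeta>_eq \<zeta>\<phi> \<phi> tan_gen_add_int_pi[of y k] tan_gen_add_int_pi[of y0 k0] y y0 by simp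
  have small: "\<bar>y - y0 + of_int (k - k0) * \<pi>\<^sub>a\<bar> < \<pi>\<^sub>a"
    using assms(3) \<zeta>_eq by simp
  have "y \<in> {- (\<pi>\<^sub>a / 2)<..<\<pi>\<^sub>a / 2}" "y0 \<in> {- (\<pi>\<^sub>a / 2)<..<\<pi>\<^sub>a / 2}"
    using y y0 by (auto simp: abs_less_iff)
  from strict_mono_on_diff_eq_int_multiple[OF strict_mono_on_tan_gen_minus_id this pi_gen_pos diff small]
  have "k - k0 = 0" "y = y0" .
  then show ?thesis
    using \<zeta>_eq by simp
qed

end

theorem mainTheorem9:
  fixes a \<phi> :: real
  assumes "a \<ge> 1"
    and "0 \<le> \<phi>" and "\<phi> < 2 * pi_gen a"
    and "\<phi> \<noteq> pi_gen a / 2" and "\<phi> \<noteq> 3 * pi_gen a / 2"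
  shows "{\<zeta>. \<bar>\<zeta>\<bar> < pi_gen a \<and> cos_gen a (\<zeta> + \<phi>) \<noteq> 0
              \<and> tan_gen a (\<zeta> + \<phi>) - tan_gen a \<phi> = \<zeta>} = {0}"
proof -
  interpret gen_trig a
    by unfold_locales (rule assms(1))
  have cos_\<phi>: "cos_gen a \<phi> \<noteq> 0"
    using assms(2-5) by (rule cos_gen_nonzero_off_poles)
  have "\<zeta> = 0" if "\<bar>\<zeta>\<bar> < \<pi>\<^sub>a" "cos_gen a (\<zeta> + \<phi>) \<noteq> 0" "tan_gen a (\<zeta> + \<phi>) - tan_gen a \<phi> = \<zeta>"
    for \<zeta>
    using tan_gen_difference_eq_imp_zero[OF cos_\<phi> that(2,1,3)] .
  with cos_\<phi> pi_gen_pos show ?thesis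
    by auto
qed

end
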